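(* Let $(X,\|\cdot\|)$ be a normed linear space over $\mathbb{R}$ or $\mathbb{C}$, and let $a,x_1,\dots,x_n\in X\setminus\{0\}$ satisfy $\|a\|\ge\|x_j-a\|$ for each $j\in\{1,\dots,n\}$. Then for any $p_1,\dots,p_n\ge0$ with $\sum_{j=1}^n p_j=1$, $$\frac{\big\|\sum_{j=1}^n p_jx_j\big\|}{\sum_{j=1}^n p_j\|x_j\|}\ \ge\ \min_{1\le j\le n}\left\{\frac{\|a\|-\|x_j-a\|}{\|x_j\|}\right\}\ (\ge0).$$ The inequality is sharp: equality holds when $x_1=\dots=x_n=\varepsilon a$ for some $\varepsilon\in(0,1)$. *)

theory Defs
  imports Main "HOL.Real_Vector_Spaces"
begin

end

theory Submission
  imports Defs
begin

text \<open>Writing \<open>\<Sum>j. p j *\<^sub>R x j = a - (\<Sum>j. p j *\<^sub>R (a - x j))\<close>, the reverse triangle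
  inequality gives \<open>\<parallel>\<Sum>j. p j *\<^sub>R x j\<parallel> \<ge> \<parallel>a\<parallel> - (\<Sum>j. p j * \<parallel>x j - a\<parallel>) = \<Sum>j. p j * (\<parallel>a\<parallel> - \<parallel>x j - a\<parallel>)\<close>,
  and each summand is at least \<open>m * p j * \<parallel>x j\<parallel>\<close> for the minimum \<open>m\<close> of the ratios.
  The hypothesis \<open>\<parallel>a\<parallel> \<ge> \<parallel>x j - a\<parallel>\<close> is only needed for \<open>m \<ge> 0\<close>.\<close>

lemma norm_convex_comb_ge:
  fixes a :: "'v :: real_normed_vector"
  assumes p_nonneg: "\<forall>j\<in>S. p j \<ge> 0" and p_sum: "sum p S = 1"
  shows "norm a - (\<Sum>j\<in>S. p j * norm (x j - a)) \<le> norm (\<Sum>j\<in>S. p j *\<^sub>R x j)"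
proof -
  have decomp: "(\<Sum>j\<in>S. p j *\<^sub>R x j) = a - (\<Sum>j\<in>S. p j *\<^sub>R (a - x j))"
    using p_sum by (simp add: scaleR_diff_right sum_subtractf flip: scaleR_sum_left)
  have "norm (\<Sum>j\<in>S. p j *\<^sub>R (a - x j)) \<le> (\<Sum>j\<in>S. p j * norm (x j - a))"
  proof -
    have "norm (\<Sum>j\<in>S. p j *\<^sub>R (a - x j)) \<le> (\<Sum>j\<in>S. norm (p j *\<^sub>R (a - x j)))"
      by (rule norm_sum)
    also have "\<dots> = (\<Sum>j\<in>S. p j * norm (x j - a))"
      using p_nonneg by (intro sum.cong) (auto simp: norm_minus_commute)
    finally show ?thesis .
  qed
  moreover have "norm a - norm (\<Sum>j\<in>S. p j *\<^sub>R (a - x j))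
      \<le> norm (a - (\<Sum>j\<in>S. p j *\<^sub>R (a - x j)))"
    by (rule norm_triangle_ineq2)
  ultimately show ?thesis unfolding decomp by linarith
qed

lemma weighted_norm_sum_pos:
  fixes x :: "'a \<Rightarrow> 'v :: real_normed_vector"
  assumes p_nonneg: "\<forall>j\<in>S. p j \<ge> 0" and p_sum: "sum p S = 1"
    and x_nz: "\<forall>j\<in>S. x j \<noteq> 0"
  shows "(\<Sum>j\<in>S. p j * norm (x j)) > 0"
proof -
  have "finite S" by (metis p_sum sum.infinite zero_neq_one)
  obtain k where "k \<in> S" "p k > 0"
    using p_sum p_nonneg by (metis less_eq_real_def sum.neutral zero_neq_one)
  with \<open>finite S\<close> show ?thesis
    by (intro sum_pos2[of S k]) (use p_nonneg x_nz in auto)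
qed

lemma norm_convex_comb_ge_scaled_weighted_norm:
  fixes a :: "'v :: real_normed_vector"
  assumes p_nonneg: "\<forall>j\<in>S. p j \<ge> 0" and p_sum: "sum p S = 1"
    and c: "\<forall>j\<in>S. c * norm (x j) \<le> norm a - norm (x j - a)"
  shows "c * (\<Sum>j\<in>S. p j * norm (x j)) \<le> norm (\<Sum>j\<in>S. p j *\<^sub>R x j)"
proof -
  have "c * (\<Sum>j\<in>S. p j * norm (x j)) = (\<Sum>j\<in>S. p j * (c * norm (x j)))"
    by (simp add: sum_distrib_left algebra_simps)
  also have "\<dots> \<le> (\<Sum>j\<in>S. p j * (norm a - norm (x j - a)))"
    using c p_nonneg by (intro sum_mono mult_left_mono) auto
  also have "\<dots> = norm a - (\<Sum>j\<in>S. p j * norm (x j - a))"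
    using p_sum by (simp add: right_diff_distrib sum_subtractf flip: sum_distrib_right)
  also have "\<dots> \<le> norm (\<Sum>j\<in>S. p j *\<^sub>R x j)"
    using p_nonneg p_sum by (rule norm_convex_comb_ge)
  finally show ?thesis .
qed

lemma Min_ratio_le_norm_convex_comb_ratio:
  fixes a :: "'v :: real_normed_vector"
  assumes p_nonneg: "\<forall>j\<in>S. p j \<ge> 0" and p_sum: "sum p S = 1"
    and x_nz: "\<forall>j\<in>S. x j \<noteq> 0"
  shows "Min ((\<lambda>j. (norm a - norm (x j - a)) / norm (x j)) ` S)
           \<le> norm (\<Sum>j\<in>S. p j *\<^sub>R x j) / (\<Sum>j\<in>S. p j * norm (x j))"
proof -
  let ?m = "Min ((\<lambda>j. (norm a - norm (x j - a)) / norm (x j)) ` S)"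
  have "finite S" by (metis p_sum sum.infinite zero_neq_one)
  have "\<forall>j\<in>S. ?m \<le> (norm a - norm (x j - a)) / norm (x j)"
    using \<open>finite S\<close> by simp
  then have "\<forall>j\<in>S. ?m * norm (x j) \<le> norm a - norm (x j - a)"
    using x_nz by (simp add: pos_le_divide_eq)
  then have "?m * (\<Sum>j\<in>S. p j * norm (x j)) \<le> norm (\<Sum>j\<in>S. p j *\<^sub>R x j)"
    by (rule norm_convex_comb_ge_scaled_weighted_norm[OF p_nonneg p_sum])
  then show ?thesis
    using weighted_norm_sum_pos[OF p_nonneg p_sum x_nz] by (simp add: pos_le_divide_eq)
qed

lemma norm_convex_comb_ratio_collinear:
  fixes a :: "'v :: real_normed_vector"
  assumes p_sum: "sum p S = 1" and a_nz: "a \<noteq> 0" and "\<epsilon> > 0"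
    and x_eq: "\<forall>j\<in>S. x j = \<epsilon> *\<^sub>R a"
  shows "norm (\<Sum>j\<in>S. p j *\<^sub>R x j) / (\<Sum>j\<in>S. p j * norm (x j)) = 1"
proof -
  have "(\<Sum>j\<in>S. p j *\<^sub>R x j) = \<epsilon> *\<^sub>R a"
    using x_eq p_sum by (simp flip: scaleR_sum_left scaleR_scaleR)
  moreover have "(\<Sum>j\<in>S. p j * norm (x j)) = \<epsilon> * norm a"
    using x_eq p_sum \<open>\<epsilon> > 0\<close> by (simp flip: sum_distrib_right)
  ultimately show ?thesis using a_nz \<open>\<epsilon> > 0\<close> by simp
qed

lemma Min_ratio_collinear:
  fixes a :: "'v :: real_normed_vector"
  assumes "S \<noteq> {}" and a_nz: "a \<noteq> 0" and "0 < \<epsilon>" "\<epsilon> \<le> 1"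
    and x_eq: "\<forall>j\<in>S. x j = \<epsilon> *\<^sub>R a"
  shows "Min ((\<lambda>j. (norm a - norm (x j - a)) / norm (x j)) ` S) = 1"
proof -
  have "\<epsilon> *\<^sub>R a - a = - ((1 - \<epsilon>) *\<^sub>R a)"
    by (simp add: algebra_simps)
  then have "norm (\<epsilon> *\<^sub>R a - a) = (1 - \<epsilon>) * norm a"
    using \<open>\<epsilon> \<le> 1\<close> by simp
  then have "(\<lambda>j. (norm a - norm (x j - a)) / norm (x j)) ` S = {1}"
    using \<open>S \<noteq> {}\<close> x_eq a_nz \<open>0 < \<epsilon>\<close> by (auto simp: field_simps)
  then show ?thesis by simp
qed

theorem theorem2p3:
  fixes a :: "'v :: real_normed_vector"
    and x :: "nat \<Rightarrow> 'v"
    and p :: "nat \<Rightarrow> real"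
    and n :: nat
  assumes a_nz: "a \<noteq> 0"
    and x_nz: "\<forall>j\<in>{1..n}. x j \<noteq> 0"
    and dist: "\<forall>j\<in>{1..n}. norm a \<ge> norm (x j - a)"
    and p_nonneg: "\<forall>j\<in>{1..n}. p j \<ge> 0"
    and p_sum: "(\<Sum>j=1..n. p j) = 1"
  shows "norm (\<Sum>j=1..n. p j *\<^sub>R x j) / (\<Sum>j=1..n. p j * norm (x j))
           \<ge> Min ((\<lambda>j. (norm a - norm (x j - a)) / norm (x j)) ` {1..n})
       \<and> Min ((\<lambda>j. (norm a - norm (x j - a)) / norm (x j)) ` {1..n}) \<ge> 0
       \<and> (\<forall>\<epsilon>::real. 0 < \<epsilon> \<and> \<epsilon> < 1 \<and> (\<forall>j\<in>{1..n}. x j = \<epsilon> *\<^sub>R a) \<longrightarrow>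
            norm (\<Sum>j=1..n. p j *\<^sub>R x j) / (\<Sum>j=1..n. p j * norm (x j))
            = Min ((\<lambda>j. (norm a - norm (x j - a)) / norm (x j)) ` {1..n}))"
proof -
  have nonempty: "{1..n} \<noteq> {}" using p_sum by (cases "n = 0") auto
  have "Min ((\<lambda>j. (norm a - norm (x j - a)) / norm (x j)) ` {1..n}) \<ge> 0"
    using nonempty dist by simp
  moreover have "norm (\<Sum>j=1..n. p j *\<^sub>R x j) / (\<Sum>j=1..n. p j * norm (x j))
      = Min ((\<lambda>j. (norm a - norm (x j - a)) / norm (x j)) ` {1..n})"
    if "0 < \<epsilon>" "\<epsilon> < 1" "\<forall>j\<in>{1..n}. x j = \<epsilon> *\<^sub>R a" for \<epsilon> :: real
  proof -
    have "Min ((\<lambda>j. (norm a - norm (x j - a)) / norm (x j)) ` {1..n}) = 1"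
      using nonempty a_nz that by (intro Min_ratio_collinear) auto
    with norm_convex_comb_ratio_collinear[OF p_sum a_nz that(1,3)] show ?thesis
      by (simp only:)
  qed
  ultimately show ?thesis
    using Min_ratio_le_norm_convex_comb_ratio[OF p_nonneg p_sum x_nz] by blast
qed

end
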